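(* Let $\mathcal{H}_X$, $\mathcal{H}_R$ be finite-dimensional Hilbert spaces, $U$ and $V_S$ unitaries on $\mathcal{H}_X$, and $S_{\mathrm{in}}=\{|\psi_1\rangle,\dots,|\psi_t\rangle\}$ a finite set of unit vectors in $\mathcal{H}_X\otimes\mathcal{H}_R$ such that $|\langle\psi_j|(U^\dagger V_S\otimes I)|\psi_j\rangle|=1$ for all $j$ (perfect training). If $S_{\mathrm{in}}$ is orthogonal partitioning resistant, then there exists $\theta\in(-\pi,\pi]$ such that $\langle\psi_j|(U^\dagger V_S\otimes I)|\psi_j\rangle=e^{i\theta}$ for all $|\psi_j\rangle\in S_{\mathrm{in}}$.
   Context: A set $S_{\mathrm{in}}$ of vectors is orthogonal partitioning resistant (OPR) iff for every partition $S_{\mathrm{in}}=A\cup B$ with $A\cap B=\emptyset$ one has $A\not\subseteq\mathrm{span}(B)^\perp$ (equivalently $B\not\subseteq\mathrm{span}(A)^\perp$). *)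

theory Defs
  imports "HOL-Analysis.Analysis"
begin

text \<open>Finite-dimensional complex Hilbert spaces are modelled as complex^'n for a
finite index type 'n; H_X \<otimes> H_R is complex^('x \<times> 'r).\<close>

definition cinner :: "complex^'n \<Rightarrow> complex^'n \<Rightarrow> complex" where
  "cinner x y = (\<Sum>i\<in>UNIV. cnj (x $ i) * y $ i)"

definition cadjoint :: "complex^'n^'m \<Rightarrow> complex^'m^'n" where
  "cadjoint A = (\<chi> i j. cnj (A $ j $ i))"

definition unitary :: "complex^'n^'n \<Rightarrow> bool" where
  "unitary U \<longleftrightarrow> cadjoint U ** U = mat 1 \<and> U ** cadjoint U = mat 1"

definition tensor_id :: "complex^'x::finite^'x \<Rightarrow> complex^('x \<times> 'r::finite)^('x \<times> 'r)" where
  "tensor_id A = (\<chi> p q. if snd p = snd q then A $ fst p $ fst q else 0)"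

definition cspan :: "(complex^'n) set \<Rightarrow> (complex^'n) set" where
  "cspan B = {x. \<exists>F c. finite F \<and> F \<subseteq> B \<and> x = (\<Sum>b\<in>F. c b *s b)}"

definition orth_compl :: "(complex^'n) set \<Rightarrow> (complex^'n) set" where
  "orth_compl V = {x. \<forall>y\<in>V. cinner y x = 0}"

text \<open>Orthogonal partitioning resistance; partitions are into two nonempty parts
(for a trivial partition with an empty part the condition fails vacuously).\<close>
definition OPR :: "(complex^'n) set \<Rightarrow> bool" where
  "OPR S \<longleftrightarrow> (\<forall>A B. A \<union> B = S \<and> A \<inter> B = {} \<and> A \<noteq> {} \<and> B \<noteq> {} \<longrightarrow>
      \<not> A \<subseteq> orth_compl (cspan B))"

end

theory Submission
  imports Defs
begin

text \<open>Perfect training forces equality in the Cauchy-Schwarz inequality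
\<open>|\<langle>\<psi>|W\<psi>\<rangle>| \<le> \<parallel>\<psi>\<parallel> \<parallel>W\<psi>\<parallel>\<close> for the unitary \<open>W = U\<^sup>\<dagger>V\<^sub>S \<otimes> I\<close>, so every
\<open>\<psi> \<in> S\<^sub>i\<^sub>n\<close> is an eigenvector of \<open>W\<close> with eigenvalue \<open>\<langle>\<psi>|W\<psi>\<rangle>\<close>.
Eigenvectors of a unitary for distinct eigenvalues are orthogonal, so splitting
\<open>S\<^sub>i\<^sub>n\<close> into the vectors sharing one eigenvalue and the rest is an orthogonal
partition; orthogonal partitioning resistance rules it out, hence all
eigenvalues coincide.\<close>

lemma cinner_commute: "cinner y x = cnj (cinner x y)"
  by (simp add: cinner_def mult.commute)

lemma cinner_diff_left: "cinner (x - y) z = cinner x z - cinner y z"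
  by (simp add: cinner_def left_diff_distrib sum_subtractf)

lemma cinner_diff_right: "cinner x (y - z) = cinner x y - cinner x z"
  by (simp add: cinner_def right_diff_distrib sum_subtractf)

lemma cinner_scale_left: "cinner (c *s x) y = cnj c * cinner x y"
  by (simp add: cinner_def sum_distrib_left mult.assoc)

lemma cinner_scale_right: "cinner x (c *s y) = c * cinner x y"
  by (simp add: cinner_def sum_distrib_left mult.left_commute)

lemma cinner_sum_left: "cinner (\<Sum>b\<in>F. c b *s b) x = (\<Sum>b\<in>F. cnj (c b) * cinner b x)"
  by (simp add: cinner_def sum_component cnj_sum sum_distrib_right sum_distrib_left
      mult.assoc sum.swap[of _ F])

lemma cinner_self_eq_0_iff: "cinner x x = 0 \<longleftrightarrow> x = 0"
proof
  assume "cinner x x = 0"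
  moreover have "cinner x x = of_real (\<Sum>i\<in>UNIV. (cmod (x $ i))\<^sup>2)"
    unfolding cinner_def of_real_sum complex_norm_square by (simp add: mult.commute)
  ultimately have "(\<Sum>i\<in>UNIV. (cmod (x $ i))\<^sup>2) = 0"
    by (metis of_real_eq_0_iff)
  then show "x = 0"
    by (simp add: sum_nonneg_eq_0_iff vec_eq_iff)
qed (simp add: cinner_def)

lemma cinner_cadjoint: "cinner (A *v x) y = cinner x (cadjoint A *v y)"
  by (simp add: cinner_def cadjoint_def matrix_vector_mult_def cnj_sum sum_distrib_right
      sum_distrib_left sum.swap[of _ "UNIV::'a set"] mult.assoc mult.left_commute)

lemma cadjoint_cadjoint: "cadjoint (cadjoint A) = A"
  by (simp add: cadjoint_def vec_eq_iff)

lemma cadjoint_mult: "cadjoint (A ** B) = cadjoint B ** cadjoint A"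
  by (simp add: cadjoint_def matrix_matrix_mult_def vec_eq_iff cnj_sum mult.commute)

lemma cadjoint_tensor_id:
  "cadjoint (tensor_id A) = (tensor_id (cadjoint A) :: complex^('x::finite \<times> 'r::finite)^('x \<times> 'r))"
  by (auto simp: cadjoint_def tensor_id_def vec_eq_iff)

lemma tensor_id_mat_1: "tensor_id (mat 1) = (mat 1 :: complex^('x::finite \<times> 'r::finite)^('x \<times> 'r))"
  by (auto simp: mat_def tensor_id_def vec_eq_iff prod_eq_iff)

lemma sum_UNIV_prod_if_snd:
  fixes f :: "'x::finite \<Rightarrow> 'a::comm_monoid_add"
  shows "(\<Sum>k\<in>(UNIV::('x \<times> 'r::finite) set). if snd k = r then f (fst k) else 0) = sum f UNIV"
  by (simp add: UNIV_Times_UNIV[symmetric] sum.cartesian_product' if_distrib sum.delta'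
      del: UNIV_Times_UNIV)

lemma tensor_id_mult:
  "tensor_id A ** tensor_id B = (tensor_id (A ** B) :: complex^('x::finite \<times> 'r::finite)^('x \<times> 'r))"
proof -
  have "(\<Sum>k\<in>UNIV. (if snd p = snd k then A $ fst p $ fst k else 0) *
                   (if snd k = snd q then B $ fst k $ fst q else 0))
      = (if snd p = snd q then (A ** B) $ fst p $ fst q else 0)"
    for p q :: "'x \<times> 'r"
  proof -
    have "(\<Sum>k\<in>UNIV. (if snd p = snd k then A $ fst p $ fst k else 0) *
                     (if snd k = snd q then B $ fst k $ fst q else 0))
        = (\<Sum>k\<in>UNIV. if snd k = snd p
                     then (if snd p = snd q then A $ fst p $ fst k * B $ fst k $ fst q else 0)
                     else 0)"
      by (intro sum.cong) auto
    also have "\<dots> = (\<Sum>x\<in>UNIV. if snd p = snd q then A $ fst p $ x * B $ x $ fst q else 0)"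
      by (rule sum_UNIV_prod_if_snd)
    finally show ?thesis
      by (simp add: matrix_matrix_mult_def)
  qed
  then show ?thesis
    by (simp add: tensor_id_def matrix_matrix_mult_def vec_eq_iff del: split_paired_All)
qed

lemma unitary_cadjoint: "unitary U \<Longrightarrow> unitary (cadjoint U)"
  by (simp add: unitary_def cadjoint_cadjoint)

lemma unitary_mult:
  assumes "unitary U" and "unitary V"
  shows "unitary (U ** V)"
proof -
  have "cadjoint (U ** V) ** (U ** V) = cadjoint V ** (cadjoint U ** U) ** V"
    and "(U ** V) ** cadjoint (U ** V) = U ** (V ** cadjoint V) ** cadjoint U"
    by (simp_all add: cadjoint_mult matrix_mul_assoc)
  with assms show ?thesis
    by (simp add: unitary_def)
qed

lemma unitary_tensor_id:
  "unitary U \<Longrightarrow> unitary (tensor_id U :: complex^('x::finite \<times> 'r::finite)^('x \<times> 'r))"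
  by (simp add: unitary_def cadjoint_tensor_id tensor_id_mult tensor_id_mat_1)

lemma unitary_cinner:
  assumes "unitary W"
  shows "cinner (W *v x) (W *v y) = cinner x y"
  using assms by (simp add: unitary_def cinner_cadjoint matrix_vector_mul_assoc)

lemma unitary_eigenvector_if_cmod_cinner_eq_1:
  assumes "unitary W" and "cinner \<psi> \<psi> = 1" and "cmod (cinner \<psi> (W *v \<psi>)) = 1"
  shows "W *v \<psi> = cinner \<psi> (W *v \<psi>) *s \<psi>"
proof -
  define c where "c = cinner \<psi> (W *v \<psi>)"
  have "c * cnj c = of_real ((cmod c)\<^sup>2)"
    by (rule complex_norm_square[symmetric])
  then have c_unimodular: "c * cnj c = 1"
    using assms(3) by (simp add: c_def)
  have "cinner (W *v \<psi>) \<psi> = cnj c"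
    by (simp add: c_def cinner_commute[of _ \<psi>])
  moreover have "cinner (W *v \<psi>) (W *v \<psi>) = 1"
    using assms(1,2) by (simp add: unitary_cinner)
  ultimately have "cinner (W *v \<psi> - c *s \<psi>) (W *v \<psi> - c *s \<psi>) = 1 - c * cnj c"
    using assms(2)
    by (simp add: cinner_diff_left cinner_diff_right cinner_scale_left cinner_scale_right
        c_def[symmetric] algebra_simps)
  then have "W *v \<psi> - c *s \<psi> = 0"
    by (simp add: c_unimodular cinner_self_eq_0_iff)
  then show ?thesis
    by (simp add: c_def)
qed

lemma unitary_eigenvectors_orthogonal:
  assumes "unitary W" and "W *v a = \<alpha> *s a" and "W *v b = \<beta> *s b"
    and "cmod \<alpha> = 1" and "\<alpha> \<noteq> \<beta>"
  shows "cinner a b = 0"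
proof (rule ccontr)
  assume "cinner a b \<noteq> 0"
  moreover have "cinner a b = cnj \<alpha> * \<beta> * cinner a b"
    using unitary_cinner[OF assms(1), of a b] assms(2,3)
    by (simp add: cinner_scale_left cinner_scale_right mult_ac)
  ultimately have "cnj \<alpha> * \<beta> = 1"
    by (metis mult_cancel_right1)
  then have "\<alpha> * cnj \<alpha> * \<beta> = \<alpha>"
    by (simp add: mult.assoc)
  moreover have "\<alpha> * cnj \<alpha> = 1"
    using assms(4) by (simp add: complex_norm_square[symmetric])
  ultimately show False
    using assms(5) by simp
qed

lemma subset_orth_compl_cspanI:
  assumes "\<forall>a\<in>A. \<forall>b\<in>B. cinner b a = 0"
  shows "A \<subseteq> orth_compl (cspan B)"
proof (clarsimp simp: orth_compl_def cspan_def)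
  fix a F c
  assume "a \<in> A" and "F \<subseteq> B"
  then have "\<forall>b\<in>F. cinner b a = 0"
    using assms by blast
  then show "cinner (\<Sum>b\<in>F. c b *s b) a = 0"
    by (simp add: cinner_sum_left)
qed

lemma OPR_const_if_orthogonal_classes:
  assumes "OPR S"
    and orth: "\<forall>a\<in>S. \<forall>b\<in>S. f a \<noteq> f b \<longrightarrow> cinner b a = 0"
    and "a \<in> S" and "b \<in> S"
  shows "f a = f b"
proof (rule ccontr)
  assume "f a \<noteq> f b"
  define A where "A = {x\<in>S. f x = f a}"
  have "A \<union> (S - A) = S" "A \<inter> (S - A) = {}" "A \<noteq> {}" "S - A \<noteq> {}"
    using \<open>a \<in> S\<close> \<open>b \<in> S\<close> \<open>f a \<noteq> f b\<close> by (auto simp: A_def)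
  moreover have "\<forall>x\<in>A. \<forall>y\<in>S - A. cinner y x = 0"
  proof (intro ballI)
    fix x y
    assume "x \<in> A" and "y \<in> S - A"
    then have "x \<in> S" and "y \<in> S" and "f x \<noteq> f y"
      by (auto simp: A_def)
    with orth show "cinner y x = 0"
      by blast
  qed
  then have "A \<subseteq> orth_compl (cspan (S - A))"
    by (rule subset_orth_compl_cspanI)
  ultimately show False
    using \<open>OPR S\<close> unfolding OPR_def by blast
qed

lemma cmod_eq_1_imp_exp_Arg:
  assumes "cmod z = 1"
  shows "z = exp (\<i> * of_real (Arg z))"
proof -
  have "z = rcis (cmod z) (Arg z)"
    by (rule rcis_cmod_Arg[symmetric])
  then show ?thesis
    using assms by (simp add: rcis_def cis_conv_exp)
qed

theorem lemma4:
  fixes U VS :: "complex^'x::finite^'x"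
    and S :: "(complex^('x \<times> 'r::finite)) set"
  assumes "unitary U" and "unitary VS"
    and "finite S"
    and "\<forall>\<psi>\<in>S. cinner \<psi> \<psi> = 1"
    and "\<forall>\<psi>\<in>S. cmod (cinner \<psi> (tensor_id (cadjoint U ** VS) *v \<psi>)) = 1"
    and "OPR S"
  shows "\<exists>\<theta>\<in>{-pi<..pi}. \<forall>\<psi>\<in>S. cinner \<psi> (tensor_id (cadjoint U ** VS) *v \<psi>) = exp (\<i> * of_real \<theta>)"
proof -
  define W :: "complex^('x \<times> 'r)^('x \<times> 'r)" where "W = tensor_id (cadjoint U ** VS)"
  define l where "l \<psi> = cinner \<psi> (W *v \<psi>)" for \<psi>
  have W: "unitary W"
    using assms(1,2) by (simp add: W_def unitary_tensor_id unitary_mult unitary_cadjoint)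
  have unimodular: "cmod (l \<psi>) = 1" if "\<psi> \<in> S" for \<psi>
    using assms(5) that by (simp add: l_def W_def)
  have eigen: "W *v \<psi> = l \<psi> *s \<psi>" if "\<psi> \<in> S" for \<psi>
    using unitary_eigenvector_if_cmod_cinner_eq_1[OF W] assms(4,5) that
    by (simp add: l_def W_def)
  have "cinner b a = 0" if "a \<in> S" "b \<in> S" "l a \<noteq> l b" for a b
    using that by (intro unitary_eigenvectors_orthogonal[OF W eigen eigen unimodular]) auto
  then have same_eigenvalue: "l a = l b" if "a \<in> S" "b \<in> S" for a b
    using OPR_const_if_orthogonal_classes[OF assms(6)] that by blast
  obtain z where "cmod z = 1" and "\<forall>\<psi>\<in>S. l \<psi> = z"
  proof (cases "S = {}")
    case False
    then obtain \<psi>\<^sub>0 where "\<psi>\<^sub>0 \<in> S"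
      by blast
    then show ?thesis
      using that[of "l \<psi>\<^sub>0"] same_eigenvalue unimodular by blast
  qed (use that[of 1] in simp)
  then show ?thesis
    using Arg_bounded[of z] cmod_eq_1_imp_exp_Arg
    by (intro bexI[of _ "Arg z"]) (auto simp: l_def W_def)
qed

end
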